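(* Consider the NWLA-CuSum stopping time $\overline{\tau}(b)$ with window size $w$ as defined in the context. For any change-point $\nu\ge1$ and any $b>0$, $$\operatorname{ess\,sup}\mathbb{E}_\nu\big[(\overline{\tau}(b)-\nu+1)^+\mid\mathcal{F}_{\nu-1}\big]\le\mathbb{E}_1[\overline{\tau}(b)].$$
   Context: Let $X_1,X_2,\dots\in\mathbb{R}^d$ be independent; for a deterministic change-point $\nu\ge1$, $X_1,\dots,X_{\nu-1}$ have known density $p_0$ and $X_\nu,X_{\nu+1},\dots$ have density $p_1$, w.r.t. a dominating measure $\mu$. $\mathbb{P}_\nu,\mathbb{E}_\nu$ denote probability/expectation with change-point $\nu$; $\mathcal{F}_0$ trivial, $\mathcal{F}_n=\sigma(X_1,\dots,X_n)$. A fixed density estimation procedure maps a finite collection of observations to a density w.r.t. $\mu$; for a positive integer $w$ and $n>w$, $\widehat{p}^w_n$ is its output on $X_{n-w},\dots,X_{n-1}$. Let $\widehat{Z}^w_n:=\log(\widehat{p}^w_n(X_n)/p_0(X_n))$ for $n>w$; $\overline{W}(1)=\dots=\overline{W}(w)=0$, $\overline{W}(n)=(\overline{W}(n-1))^++\widehat{Z}^w_n$ for $n>w$, and $\overline{\tau}(b):=\inf\{n>w:\overline{W}(n)\ge b\}$. *)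

theory Defs
  imports "HOL-Probability.Probability"
begin

definition is_density :: "'a measure \<Rightarrow> ('a \<Rightarrow> real) \<Rightarrow> bool" where
  "is_density mu p \<longleftrightarrow> p \<in> borel_measurable mu \<and> (\<forall>x\<in>space mu. 0 \<le> p x)
      \<and> (\<integral>\<^sup>+ x. ennreal (p x) \<partial>mu) = 1"

text \<open>Law of the whole observation sequence with change point nu: coordinate i of
  omega is X_i (i \<ge> 1); X_i has density p0 for i < nu and p1 for i \<ge> nu.
  Coordinate 0 is an unused dummy coordinate (distributed with p0, since nu \<ge> 1).\<close>
definition Pnu :: "'a measure \<Rightarrow> ('a \<Rightarrow> real) \<Rightarrow> ('a \<Rightarrow> real) \<Rightarrow> nat \<Rightarrow> (nat \<Rightarrow> 'a) measure" where
  "Pnu mu p0 p1 nu = (\<Pi>\<^sub>M i\<in>UNIV. density mu (\<lambda>x. ennreal (if i < nu then p0 x else p1 x)))"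

definition filt :: "'a measure \<Rightarrow> (nat \<Rightarrow> 'a) measure \<Rightarrow> nat \<Rightarrow> (nat \<Rightarrow> 'a) measure" where
  "filt mu M k = sigma (space M)
     {(\<lambda>\<omega>. \<omega> i) -` A \<inter> space M | i A. i \<in> {1..k} \<and> A \<in> sets mu}"

text \<open>The estimated density from the window X_{n-w},...,X_{n-1}, presented to the
  estimation procedure as the tuple j \<mapsto> X_{n-w+j}, j < w.\<close>
definition window :: "nat \<Rightarrow> nat \<Rightarrow> (nat \<Rightarrow> 'a) \<Rightarrow> (nat \<Rightarrow> 'a)" where
  "window w n \<omega> = (\<lambda>j\<in>{..<w}. \<omega> (n - w + j))"

definition Zhat :: "((nat \<Rightarrow> 'a) \<Rightarrow> 'a \<Rightarrow> real) \<Rightarrow> ('a \<Rightarrow> real) \<Rightarrow> nat \<Rightarrow> nat \<Rightarrow> (nat \<Rightarrow> 'a) \<Rightarrow> real" where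
  "Zhat est p0 w n \<omega> = ln (est (window w n \<omega>) (\<omega> n) / p0 (\<omega> n))"

fun Wbar :: "((nat \<Rightarrow> 'a) \<Rightarrow> 'a \<Rightarrow> real) \<Rightarrow> ('a \<Rightarrow> real) \<Rightarrow> nat \<Rightarrow> nat \<Rightarrow> (nat \<Rightarrow> 'a) \<Rightarrow> real" where
  "Wbar est p0 w 0 \<omega> = 0"
| "Wbar est p0 w (Suc n) \<omega> =
     (if Suc n \<le> w then 0 else max (Wbar est p0 w n \<omega>) 0 + Zhat est p0 w (Suc n) \<omega>)"

definition taubar :: "((nat \<Rightarrow> 'a) \<Rightarrow> 'a \<Rightarrow> real) \<Rightarrow> ('a \<Rightarrow> real) \<Rightarrow> nat \<Rightarrow> real \<Rightarrow> (nat \<Rightarrow> 'a) \<Rightarrow> enat" where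
  "taubar est p0 w b \<omega> =
     (if \<exists>n>w. b \<le> Wbar est p0 w n \<omega> then enat (LEAST n. n > w \<and> b \<le> Wbar est p0 w n \<omega>) else \<infinity>)"

end

theory Submission
  imports Defs
begin

(* Let omega' = restart nu omega be the observations from the change point on, re-indexed
   so that X_nu becomes X_1.  After time w the windows of omega' are windows of omega, and
   W |-> max W 0 + z is monotone, so the NWLA-CuSum statistic of omega' at time n is at most
   that of omega at time n + nu - 1; hence (tau(b) - nu + 1)^+ <= tau(b)(omega') pathwise.
   Under P_nu, omega' is built from coordinates outside 1..nu-1, so it is independent of
   F_(nu-1) and has law P_1.  Its conditional expectation given F_(nu-1) is therefore the
   constant E_1[tau(b)], which bounds the essential supremum. *)

context
  fixes mu :: "'a measure" and est :: "(nat \<Rightarrow> 'a) \<Rightarrow> 'a \<Rightarrow> real" and p0 :: "'a \<Rightarrow> real"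
    and w :: nat
  assumes est: "(\<lambda>(v, x). est v x) \<in> borel_measurable ((\<Pi>\<^sub>M j\<in>{..<w}. mu) \<Otimes>\<^sub>M mu)"
    and p0: "p0 \<in> borel_measurable mu"
begin

lemma measurable_window: "window w n \<in> measurable (\<Pi>\<^sub>M i\<in>UNIV. mu) (\<Pi>\<^sub>M j\<in>{..<w}. mu)"
  unfolding window_def by measurable

lemma measurable_Zhat: "Zhat est p0 w n \<in> borel_measurable (\<Pi>\<^sub>M i\<in>UNIV. mu)"
proof -
  have "(\<lambda>\<omega>. est (window w n \<omega>) (\<omega> n)) \<in> borel_measurable (\<Pi>\<^sub>M i\<in>UNIV. mu)"
    using measurable_comp[OF measurable_Pair[OF measurable_window] est] by (simp add: o_def)
  with p0 show ?thesis
    unfolding Zhat_def by measurable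
qed

lemma measurable_Wbar: "Wbar est p0 w n \<in> borel_measurable (\<Pi>\<^sub>M i\<in>UNIV. mu)"
proof (induction n)
  case (Suc n)
  note [measurable] = Suc measurable_Zhat[of "Suc n"]
  show ?case
    by (simp only: Wbar.simps) measurable
qed simp

lemma measurable_taubar:
  "(\<lambda>\<omega>. ennreal_of_enat (taubar est p0 w b \<omega>)) \<in> borel_measurable (\<Pi>\<^sub>M i\<in>UNIV. mu)"
proof -
  note [measurable] = measurable_Wbar
  have "taubar est p0 w b \<in> measurable (\<Pi>\<^sub>M i\<in>UNIV. mu) (count_space UNIV)"
    unfolding taubar_def by measurable
  then show ?thesis
    by (rule measurable_compose) simp
qed

end

(* Coordinate 0 is the unused dummy coordinate of Pnu; it stays in place. *)
definition restart_index :: "nat \<Rightarrow> nat \<Rightarrow> nat" where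
  "restart_index nu i = (if i = 0 then 0 else i + nu - 1)"

definition restart :: "nat \<Rightarrow> (nat \<Rightarrow> 'a) \<Rightarrow> nat \<Rightarrow> 'a" where
  "restart nu \<omega> i = \<omega> (restart_index nu i)"

lemma restart_index_less_iff: "1 \<le> nu \<Longrightarrow> restart_index nu i < nu \<longleftrightarrow> i < 1"
  by (auto simp: restart_index_def)

lemma restart_index_notin: "1 \<le> nu \<Longrightarrow> restart_index nu i \<notin> {1..nu - 1}"
  by (auto simp: restart_index_def)

lemma restart_restrict:
  "1 \<le> nu \<Longrightarrow> restart nu (restrict \<omega> (- {1..nu - 1})) = restart nu \<omega>"
  by (auto simp: fun_eq_iff restart_def restart_index_def)

lemma Wbar_after_window:
  "w < n \<Longrightarrow> Wbar est p0 w n \<omega> = max (Wbar est p0 w (n - 1) \<omega>) 0 + Zhat est p0 w n \<omega>"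
  by (cases n) simp_all

lemma Wbar_window: "Wbar est p0 w w \<omega> = 0"
  by (cases w) simp_all

lemma Zhat_restart:
  assumes "w < n" "1 \<le> nu"
  shows "Zhat est p0 w n (restart nu \<omega>) = Zhat est p0 w (n + nu - 1) \<omega>"
proof -
  have "window w n (restart nu \<omega>) = window w (n + nu - 1) \<omega>"
    using assms unfolding window_def restart_def restart_index_def
    by (intro restrict_ext) (auto simp: ac_simps)
  moreover have "restart nu \<omega> n = \<omega> (n + nu - 1)"
    using assms by (simp add: restart_def restart_index_def)
  ultimately show ?thesis
    by (simp add: Zhat_def)
qed

lemma Wbar_restart_le:
  assumes "w < n" "1 \<le> nu"
  shows "Wbar est p0 w n (restart nu \<omega>) \<le> Wbar est p0 w (n + nu - 1) \<omega>"
  using Suc_leI[OF \<open>w < n\<close>]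
proof (induction n rule: nat_induct_at_least)
  case base
  show ?case
    using \<open>1 \<le> nu\<close> Wbar_after_window[of w "Suc w + nu - 1" est p0 \<omega>]
    by (simp add: Wbar_window Zhat_restart)
next
  case (Suc n)
  show ?case
    using Suc \<open>1 \<le> nu\<close> Wbar_after_window[of w "Suc n + nu - 1" est p0 \<omega>]
    by (simp add: Zhat_restart max.mono)
qed

lemma taubar_le_enat: "w < n \<Longrightarrow> b \<le> Wbar est p0 w n \<omega> \<Longrightarrow> taubar est p0 w b \<omega> \<le> enat n"
  by (auto simp: taubar_def intro: Least_le)

lemma taubar_enatD:
  assumes "taubar est p0 w b \<omega> = enat n"
  shows "w < n \<and> b \<le> Wbar est p0 w n \<omega>"
proof -
  have "\<exists>n>w. b \<le> Wbar est p0 w n \<omega>" and "n = (LEAST n. w < n \<and> b \<le> Wbar est p0 w n \<omega>)"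
    using assms by (auto simp: taubar_def split: if_splits)
  then show ?thesis
    by (metis (mono_tags, lifting) LeastI_ex)
qed

lemma taubar_le_taubar_restart:
  assumes "1 \<le> nu"
  shows "taubar est p0 w b \<omega> \<le> taubar est p0 w b (restart nu \<omega>) + enat (nu - 1)"
proof (cases "taubar est p0 w b (restart nu \<omega>)")
  case (enat n)
  then have "w < n" "b \<le> Wbar est p0 w n (restart nu \<omega>)"
    by (auto dest: taubar_enatD)
  with assms have "taubar est p0 w b \<omega> \<le> enat (n + nu - 1)"
    by (intro taubar_le_enat order.trans[OF _ Wbar_restart_le]) auto
  with enat assms show ?thesis
    by simp
qed simp

lemma ennreal_of_enat_shift_le:
  assumes "x \<le> y + enat (nu - 1)" "1 \<le> nu"
  shows "ennreal_of_enat x + 1 - of_nat nu \<le> ennreal_of_enat y"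
proof -
  have "ennreal_of_enat x + 1 \<le> ennreal_of_enat y + of_nat (nu - 1) + 1"
    using assms(1)
    by (metis add_right_mono ennreal_of_enat_enat ennreal_of_enat_le_iff ennreal_of_enat_plus)
  also have "\<dots> = ennreal_of_enat y + of_nat nu"
    using assms(2)
    by (metis Suc_diff_1 add.assoc less_le_trans of_nat_Suc add.commute zero_less_one)
  finally show ?thesis
    by (simp add: ennreal_minus_le_iff add.commute)
qed

lemma distr_merge_PiM_prob:
  assumes M: "\<And>i. i \<in> I \<union> J \<Longrightarrow> prob_space (M i)" and IJ: "I \<inter> J = {}"
  shows "distr (PiM I M \<Otimes>\<^sub>M PiM J M) (PiM (I \<union> J) M) (merge I J) = PiM (I \<union> J) M"
proof (rule measure_eqI_PiM_infinite[symmetric, OF refl])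
  interpret PJ: prob_space "PiM J M" using M by (intro prob_space_PiM) auto
  interpret PU: prob_space "PiM (I \<union> J) M" using M by (intro prob_space_PiM) auto
  show "finite_measure (PiM (I \<union> J) M)" by unfold_locales
  fix K A assume K: "finite K" "K \<subseteq> I \<union> J" and A: "\<And>i. i \<in> K \<Longrightarrow> A i \<in> sets (M i)"
  let ?X = "prod_emb (I \<union> J) M K (Pi\<^sub>E K A)"
  let ?XI = "prod_emb I M (K \<inter> I) (Pi\<^sub>E (K \<inter> I) A)"
    and ?XJ = "prod_emb J M (K \<inter> J) (Pi\<^sub>E (K \<inter> J) A)"
  have "PiM (I \<union> J) M ?X = (\<Prod>i\<in>K. M i (A i))"
    using M K A by (intro emeasure_PiM_emb) auto
  also have "\<dots> = (\<Prod>i\<in>K \<inter> I. M i (A i)) * (\<Prod>i\<in>K \<inter> J. M i (A i))"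
  proof -
    have "K = (K \<inter> I) \<union> (K \<inter> J)"
      using K by auto
    then show ?thesis
      using K IJ by (metis finite_Int prod.union_disjoint disjoint_iff IntD2)
  qed
  also have "\<dots> = PiM I M ?XI * PiM J M ?XJ"
    using M K A by (subst (1 2) emeasure_PiM_emb) auto
  also have "\<dots> = (PiM I M \<Otimes>\<^sub>M PiM J M) (?XI \<times> ?XJ)"
    using K A by (intro PJ.emeasure_pair_measure_Times[symmetric] sets_PiM_I) auto
  also have "?XI \<times> ?XJ = merge I J -` ?X \<inter> space (PiM I M \<Otimes>\<^sub>M PiM J M)"
    using K IJ
    by (auto simp: prod_emb_def space_pair_measure space_PiM PiE_iff merge_def extensional_def)
       (metis IntI disjoint_iff)+
  finally show "PiM (I \<union> J) M ?X = distr (PiM I M \<Otimes>\<^sub>M PiM J M) (PiM (I \<union> J) M) (merge I J) ?X"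
    using K A by (simp add: emeasure_distr sets_PiM_I)
qed simp

lemma prob_space_sigma_finite_subalgebra:
  "prob_space M \<Longrightarrow> subalgebra M F \<Longrightarrow> sigma_finite_subalgebra M F"
  by (intro finite_measure_subalgebra_is_sigma_finite finite_measure_subalgebra.intro
      prob_space.finite_measure finite_measure_subalgebra_axioms.intro)

lemma nn_set_integral_PiM_restrict:
  fixes D :: "'i \<Rightarrow> 'a measure"
  assumes D: "\<And>i. prob_space (D i)"
    and B: "B \<in> sets (PiM I D)" and G: "G \<in> borel_measurable (PiM (- I) D)"
  shows "(\<integral>\<^sup>+\<omega> \<in> (\<lambda>\<omega>. restrict \<omega> I) -` B \<inter> space (PiM UNIV D). G (restrict \<omega> (- I)) \<partial>PiM UNIV D)
       = emeasure (PiM I D) B * (\<integral>\<^sup>+y. G y \<partial>PiM (- I) D)"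
proof -
  let ?P = "PiM I D \<Otimes>\<^sub>M PiM (- I) D" and ?A = "(\<lambda>\<omega>. restrict \<omega> I) -` B \<inter> space (PiM UNIV D)"
  interpret PJ: prob_space "PiM (- I) D"
    using D by (rule prob_space_PiM)
  have merge_meas: "merge I (- I) \<in> measurable ?P (PiM UNIV D)"
    using measurable_merge[of I "- I" D] by simp
  have merge_distr: "distr ?P (PiM UNIV D) (merge I (- I)) = PiM UNIV D"
    using distr_merge_PiM_prob[of I "- I" D] D by simp
  have "?A \<in> sets (PiM UNIV D)"
    using B by (intro measurable_sets[OF measurable_restrict_subset]) simp_all
  have "(\<integral>\<^sup>+\<omega> \<in> ?A. G (restrict \<omega> (- I)) \<partial>PiM UNIV D)
      = (\<integral>\<^sup>+\<omega> \<in> ?A. G (restrict \<omega> (- I)) \<partial>distr ?P (PiM UNIV D) (merge I (- I)))"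
    by (simp only: merge_distr)
  also have "\<dots> = (\<integral>\<^sup>+z. G (restrict (merge I (- I) z) (- I)) * indicator ?A (merge I (- I) z) \<partial>?P)"
    using G \<open>?A \<in> sets (PiM UNIV D)\<close> by (intro nn_integral_distr[OF merge_meas]) simp_all
  also have "\<dots> = (\<integral>\<^sup>+z. G (snd z) * indicator B (fst z) \<partial>?P)"
  proof (intro nn_integral_cong)
    fix z assume "z \<in> space ?P"
    then obtain x y where z: "z = (x, y)" "x \<in> space (PiM I D)" "y \<in> space (PiM (- I) D)"
      by (auto simp: space_pair_measure)
    then have "restrict (merge I (- I) z) I = x" "restrict (merge I (- I) z) (- I) = y"
      by (auto simp: space_PiM extensional_restrict)
    moreover have "merge I (- I) z \<in> space (PiM UNIV D)"
      using measurable_space[OF merge_meas \<open>z \<in> space ?P\<close>] .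
    ultimately show "G (restrict (merge I (- I) z) (- I)) * indicator ?A (merge I (- I) z)
        = G (snd z) * indicator B (fst z)"
      using z by (simp add: indicator_def)
  qed
  also have "\<dots> = (\<integral>\<^sup>+x. \<integral>\<^sup>+y. G y * indicator B x \<partial>PiM (- I) D \<partial>PiM I D)"
    using B G by (subst PJ.nn_integral_fst[symmetric]) simp_all
  also have "\<dots> = (\<integral>\<^sup>+x. (\<integral>\<^sup>+y. G y \<partial>PiM (- I) D) * indicator B x \<partial>PiM I D)"
    using G by (simp add: nn_integral_multc)
  also have "\<dots> = (\<integral>\<^sup>+y. G y \<partial>PiM (- I) D) * emeasure (PiM I D) B"
    by (rule nn_integral_cmult_indicator[OF B])
  finally show ?thesis
    by (simp add: mult.commute)
qed

lemma nn_cond_exp_PiM_indep: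
  fixes D :: "'i \<Rightarrow> 'a measure"
  assumes D: "\<And>i. prob_space (D i)"
    and F: "subalgebra (PiM UNIV D) F"
    and F_I: "sets F \<subseteq> sets (vimage_algebra (space (PiM UNIV D)) (\<lambda>\<omega>. restrict \<omega> I) (PiM I D))"
    and G: "G \<in> borel_measurable (PiM (- I) D)"
  shows "AE \<omega> in PiM UNIV D. nn_cond_exp (PiM UNIV D) F (\<lambda>\<omega>. G (restrict \<omega> (- I))) \<omega>
           = (\<integral>\<^sup>+\<omega>. G (restrict \<omega> (- I)) \<partial>PiM UNIV D)"
proof -
  let ?M = "PiM UNIV D" and ?c = "\<integral>\<^sup>+y. G y \<partial>PiM (- I) D"
  interpret M: prob_space ?M
    using D by (rule prob_space_PiM)
  interpret sigma_finite_subalgebra ?M F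
    using M.prob_space_axioms F by (rule prob_space_sigma_finite_subalgebra)
  have g: "(\<lambda>\<omega>. G (restrict \<omega> (- I))) \<in> borel_measurable ?M"
    using G by measurable
  have set_integral: "(\<integral>\<^sup>+\<omega> \<in> A. G (restrict \<omega> (- I)) \<partial>?M) = (\<integral>\<^sup>+\<omega> \<in> A. ?c \<partial>?M)"
    if "A \<in> sets F" for A
  proof -
    have restrict_space: "(\<lambda>\<omega>. restrict \<omega> I) \<in> space ?M \<rightarrow> space (PiM I D)"
      by (auto simp: space_PiM)
    obtain B where B: "B \<in> sets (PiM I D)" "A = (\<lambda>\<omega>. restrict \<omega> I) -` B \<inter> space ?M"
      using \<open>A \<in> sets F\<close> F_I sets_vimage_algebra2[OF restrict_space] by auto
    have "A \<in> sets ?M"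
      using \<open>A \<in> sets F\<close> F by (auto simp: subalgebra_def)
    moreover have "emeasure ?M A = emeasure (PiM I D) B"
      using \<open>A \<in> sets ?M\<close> nn_set_integral_PiM_restrict[OF D B(1), of "\<lambda>_. 1"] B(2)
      by (simp add: prob_space.emeasure_space_1 prob_space_PiM D)
    ultimately show ?thesis
      using nn_set_integral_PiM_restrict[OF D B(1) G] B(2)
        nn_integral_cmult_indicator[OF \<open>A \<in> sets ?M\<close>, of ?c]
      by (simp add: mult.commute)
  qed
  have "AE \<omega> in ?M. ?c = nn_cond_exp ?M F (\<lambda>\<omega>. G (restrict \<omega> (- I))) \<omega>"
    by (rule nn_cond_exp_charact[OF set_integral g]) simp_all
  moreover have "(\<integral>\<^sup>+\<omega>. G (restrict \<omega> (- I)) \<partial>?M) = ?c"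
  proof -
    have "space ?M \<in> sets F"
      using F by (metis sets.top subalgebra_def)
    then show ?thesis
      using set_integral[of "space ?M"] by (simp add: M.emeasure_space_1 nn_set_integral_space)
  qed
  ultimately show ?thesis
    by auto
qed

lemma measurable_component_sets_eq:
  "i \<in> I \<Longrightarrow> sets (D i) = sets N \<Longrightarrow> (\<lambda>\<omega>. \<omega> i) \<in> measurable (PiM I D) N"
  using measurable_component_singleton[of i I D] measurable_cong_sets[OF refl, of "D i" N "PiM I D"]
  by simp

lemma measurable_restart:
  assumes "\<And>i. restart_index nu i \<in> K" and "\<And>i. sets (N i) = sets (D (restart_index nu i))"
  shows "restart nu \<in> measurable (PiM K D) (PiM UNIV N)"
proof -
  have "(\<lambda>\<omega>. \<lambda>i\<in>UNIV. \<omega> (restart_index nu i)) \<in> measurable (PiM K D) (PiM UNIV N)"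
    using assms by (intro measurable_restrict measurable_component_sets_eq) simp_all
  then show ?thesis
    by (simp add: restrict_UNIV restart_def[abs_def])
qed

lemma
  assumes "\<And>i. sets (D i) = sets mu"
  shows subalgebra_filt: "subalgebra (PiM UNIV D) (filt mu (PiM UNIV D) k)"
    and sets_filt_subset: "sets (filt mu (PiM UNIV D) k)
      \<subseteq> sets (vimage_algebra (space (PiM UNIV D)) (\<lambda>\<omega>. restrict \<omega> {1..k}) (PiM {1..k} D))"
proof -
  let ?M = "PiM UNIV D" and ?I = "{1..k}"
  let ?V = "vimage_algebra (space ?M) (\<lambda>\<omega>. restrict \<omega> ?I) (PiM ?I D)"
  define G where "G = {(\<lambda>\<omega>. \<omega> i) -` A \<inter> space ?M | i A. i \<in> ?I \<and> A \<in> sets mu}"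
  have G_M: "G \<subseteq> sets ?M"
  proof
    fix X assume "X \<in> G"
    then obtain i A where "A \<in> sets mu" "X = (\<lambda>\<omega>. \<omega> i) -` A \<inter> space ?M"
      unfolding G_def by blast
    then show "X \<in> sets ?M"
      using measurable_sets[OF measurable_component_sets_eq[of i UNIV D mu]] assms by simp
  qed
  have space_filt: "space (filt mu ?M k) = space ?M"
    unfolding filt_def G_def[symmetric] using G_M sets.sets_into_space
    by (intro space_measure_of) blast
  have sets_filt: "sets (filt mu ?M k) = sigma_sets (space ?M) G"
    unfolding filt_def G_def[symmetric] using G_M sets.sets_into_space
    by (intro sets_measure_of) blast
  show "subalgebra ?M (filt mu ?M k)"
    using space_filt sets_filt sets.sigma_sets_subset[OF G_M] by (simp add: subalgebra_def)
  have G_V: "G \<subseteq> sets ?V"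
  proof
    fix X assume "X \<in> G"
    then obtain i A where iA: "i \<in> ?I" "A \<in> sets mu" "X = (\<lambda>\<omega>. \<omega> i) -` A \<inter> space ?M"
      unfolding G_def by blast
    then have B: "(\<lambda>x. x i) -` A \<inter> space (PiM ?I D) \<in> sets (PiM ?I D)"
      using assms by (intro measurable_sets[OF measurable_component_sets_eq])
    have X: "X = (\<lambda>\<omega>. restrict \<omega> ?I) -` ((\<lambda>x. x i) -` A \<inter> space (PiM ?I D)) \<inter> space ?M"
      using iA by (auto simp: space_PiM PiE_iff)
    show "X \<in> sets ?V"
      unfolding X by (rule in_vimage_algebra[OF B])
  qed
  show "sets (filt mu ?M k) \<subseteq> sets ?V"
    using sets.sigma_sets_subset[OF G_V] by (simp add: sets_filt)
qed

lemma prob_space_density_is_density: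
  assumes "is_density mu p"
  shows "prob_space (density mu (\<lambda>x. ennreal (p x)))"
proof (rule prob_spaceI)
  have "emeasure (density mu (\<lambda>x. ennreal (p x))) (space mu) = (\<integral>\<^sup>+x. ennreal (p x) \<partial>mu)"
    using assms unfolding is_density_def
    by (subst emeasure_density) (auto intro: nn_integral_cong)
  then show "emeasure (density mu (\<lambda>x. ennreal (p x))) (space (density mu (\<lambda>x. ennreal (p x)))) = 1"
    using assms by (simp add: is_density_def)
qed

lemma prob_space_Pnu_factor:
  "is_density mu p0 \<Longrightarrow> is_density mu p1 \<Longrightarrow>
    prob_space (density mu (\<lambda>x. ennreal (if i < nu then p0 x else p1 x)))"
  by (cases "i < nu") (simp_all add: prob_space_density_is_density)

lemma sets_Pnu: "sets (Pnu mu p0 p1 nu) = sets (\<Pi>\<^sub>M i\<in>UNIV. mu)"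
  unfolding Pnu_def by (intro sets_PiM_cong) simp_all

lemma measurable_restart_Pnu: "restart nu \<in> measurable (Pnu mu p0 p1 nu) (Pnu mu p0 p1 1)"
  unfolding Pnu_def by (rule measurable_restart) simp_all

lemma distr_Pnu_restart:
  assumes p0: "is_density mu p0" and p1: "is_density mu p1" and nu: "1 \<le> nu"
  shows "distr (Pnu mu p0 p1 nu) (Pnu mu p0 p1 1) (restart nu) = Pnu mu p0 p1 1"
proof -
  define D where "D = (\<lambda>i. density mu (\<lambda>x. ennreal (if i < nu then p0 x else p1 x)))"
  have "inj (restart_index nu)"
    using nu by (auto simp: inj_on_def restart_index_def)
  then have "distr (PiM UNIV D) (PiM UNIV (\<lambda>i. D (restart_index nu i)))
        (\<lambda>\<omega>. \<lambda>i\<in>UNIV. \<omega> (restart_index nu i))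
      = PiM UNIV (\<lambda>i. D (restart_index nu i))"
    using p0 p1 by (intro distr_PiM_reindex) (simp_all add: D_def prob_space_Pnu_factor)
  moreover have "PiM UNIV (\<lambda>i. D (restart_index nu i)) = Pnu mu p0 p1 1"
    using nu unfolding Pnu_def D_def by (intro PiM_cong) (simp_all add: restart_index_less_iff)
  ultimately show ?thesis
    by (simp add: Pnu_def D_def restrict_UNIV restart_def[abs_def])
qed

lemma nn_integral_Pnu_restart:
  assumes p0: "is_density mu p0" and p1: "is_density mu p1" and nu: "1 \<le> nu"
    and f: "f \<in> borel_measurable (\<Pi>\<^sub>M i\<in>UNIV. mu)"
  shows "(\<integral>\<^sup>+\<omega>. f (restart nu \<omega>) \<partial>Pnu mu p0 p1 nu) = (\<integral>\<^sup>+\<omega>. f \<omega> \<partial>Pnu mu p0 p1 1)"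
proof -
  have "f \<in> borel_measurable (Pnu mu p0 p1 1)"
    using f by (subst measurable_cong_sets[OF sets_Pnu refl])
  then have "(\<integral>\<^sup>+\<omega>. f (restart nu \<omega>) \<partial>Pnu mu p0 p1 nu)
      = (\<integral>\<^sup>+\<omega>. f \<omega> \<partial>distr (Pnu mu p0 p1 nu) (Pnu mu p0 p1 1) (restart nu))"
    by (subst nn_integral_distr[OF measurable_restart_Pnu]) simp_all
  also have "distr (Pnu mu p0 p1 nu) (Pnu mu p0 p1 1) (restart nu) = Pnu mu p0 p1 1"
    by (rule distr_Pnu_restart[OF p0 p1 nu])
  finally show ?thesis .
qed

lemma nn_cond_exp_filt_restart:
  assumes p0: "is_density mu p0" and p1: "is_density mu p1" and nu: "1 \<le> nu"
    and f: "f \<in> borel_measurable (\<Pi>\<^sub>M i\<in>UNIV. mu)"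
  shows "AE \<omega> in Pnu mu p0 p1 nu.
           nn_cond_exp (Pnu mu p0 p1 nu) (filt mu (Pnu mu p0 p1 nu) (nu - 1))
             (\<lambda>\<omega>. f (restart nu \<omega>)) \<omega>
           = (\<integral>\<^sup>+\<omega>. f \<omega> \<partial>Pnu mu p0 p1 1)"
proof -
  define D where "D = (\<lambda>i. density mu (\<lambda>x. ennreal (if i < nu then p0 x else p1 x)))"
  have M: "Pnu mu p0 p1 nu = PiM UNIV D" and D_prob: "\<And>i. prob_space (D i)"
    and D_sets: "\<And>i. sets (D i) = sets mu"
    using p0 p1 by (simp_all add: Pnu_def D_def prob_space_Pnu_factor)
  have "restart nu \<in> measurable (PiM (- {1..nu - 1}) D) (\<Pi>\<^sub>M i\<in>UNIV. mu)"
  proof (rule measurable_restart)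
    show "restart_index nu i \<in> - {1..nu - 1}" for i
      using restart_index_notin[OF nu] by blast
  qed (simp add: D_sets)
  then have tail: "(\<lambda>\<omega>. f (restart nu \<omega>)) \<in> borel_measurable (PiM (- {1..nu - 1}) D)"
    using f by (rule measurable_compose)
  have "(\<lambda>\<omega>. f (restart nu (restrict \<omega> (- {1..nu - 1})))) = (\<lambda>\<omega>. f (restart nu \<omega>))"
    by (simp only: restart_restrict[OF nu])
  then have "AE \<omega> in Pnu mu p0 p1 nu.
      nn_cond_exp (Pnu mu p0 p1 nu) (filt mu (Pnu mu p0 p1 nu) (nu - 1)) (\<lambda>\<omega>. f (restart nu \<omega>)) \<omega>
        = (\<integral>\<^sup>+\<omega>. f (restart nu \<omega>) \<partial>Pnu mu p0 p1 nu)"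
    using nn_cond_exp_PiM_indep[OF D_prob subalgebra_filt[OF D_sets] sets_filt_subset[OF D_sets]
        tail]
    unfolding M by simp
  then show ?thesis
    by (simp add: nn_integral_Pnu_restart[OF p0 p1 nu f])
qed

theorem lemma5:
  fixes mu :: "'a::euclidean_space measure"
    and p0 p1 :: "'a \<Rightarrow> real"
    and est :: "(nat \<Rightarrow> 'a) \<Rightarrow> 'a \<Rightarrow> real"
    and w nu :: nat and b :: real
  assumes mu_borel: "sets mu = sets borel"
    and p0: "is_density mu p0" and p1: "is_density mu p1"
    and est_density: "\<And>v. is_density mu (est v)"
    and est_meas: "(\<lambda>(v, x). est v x) \<in> borel_measurable ((\<Pi>\<^sub>M j\<in>{..<w}. mu) \<Otimes>\<^sub>M mu)"
    and w: "0 < w" and nu: "1 \<le> nu" and b: "0 < b"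
  shows "esssup (Pnu mu p0 p1 nu)
           (nn_cond_exp (Pnu mu p0 p1 nu) (filt mu (Pnu mu p0 p1 nu) (nu - 1))
              (\<lambda>\<omega>. ennreal_of_enat (taubar est p0 w b \<omega>) + 1 - of_nat nu))
         \<le> (\<integral>\<^sup>+ \<omega>. ennreal_of_enat (taubar est p0 w b \<omega>) \<partial>(Pnu mu p0 p1 1))"
proof -
  let ?M = "Pnu mu p0 p1 nu" and ?F = "filt mu (Pnu mu p0 p1 nu) (nu - 1)"
  define T where "T \<omega> = ennreal_of_enat (taubar est p0 w b \<omega>)" for \<omega>
  have T_meas: "T \<in> borel_measurable (\<Pi>\<^sub>M i\<in>UNIV. mu)"
    using measurable_taubar[OF est_meas] p0 unfolding T_def is_density_def by blast
  then have [measurable]: "T \<in> borel_measurable ?M" "T \<in> borel_measurable (Pnu mu p0 p1 1)"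
    by (subst measurable_cong_sets[OF sets_Pnu refl], assumption)+
  interpret sigma_finite_subalgebra ?M ?F
    using p0 p1 unfolding Pnu_def
    by (intro prob_space_sigma_finite_subalgebra prob_space_PiM subalgebra_filt
        prob_space_Pnu_factor) simp_all
  have "AE \<omega> in ?M. nn_cond_exp ?M ?F (\<lambda>\<omega>. T \<omega> + 1 - of_nat nu) \<omega>
      \<le> nn_cond_exp ?M ?F (\<lambda>\<omega>. T (restart nu \<omega>)) \<omega>"
  proof (rule nn_cond_exp_mono)
    show "AE \<omega> in ?M. T \<omega> + 1 - of_nat nu \<le> T (restart nu \<omega>)"
      unfolding T_def by (intro AE_I2 ennreal_of_enat_shift_le taubar_le_taubar_restart nu)
    show "(\<lambda>\<omega>. T (restart nu \<omega>)) \<in> borel_measurable ?M"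
      by (rule measurable_compose[OF measurable_restart_Pnu]) measurable
  qed measurable
  moreover have "AE \<omega> in ?M.
      nn_cond_exp ?M ?F (\<lambda>\<omega>. T (restart nu \<omega>)) \<omega> = (\<integral>\<^sup>+\<omega>. T \<omega> \<partial>Pnu mu p0 p1 1)"
    by (rule nn_cond_exp_filt_restart[OF p0 p1 nu T_meas])
  ultimately show ?thesis
    unfolding T_def[symmetric] by (intro esssup_I) auto
qed

end
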